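(* Let $B$ be a triangulated closed oriented two-dimensional surface, with all triangles oriented consistently with $B$. (1) Consistent collections of framed small necklaces over the simplices of $B$ (equivalently, small framed semisimplicial triangulations of circle bundles over $B$) are in natural bijection with $Or(B)$, the set of orientations of the edges of $B$; the bijection sends a collection to the edge orientations induced by its framings. (2) If $a\in Or(B)$, viewed as a $1$-cochain with values $\pm1$, then the $2$-cochain $\mathcal{F}(da)$ represents the Euler class of the circle bundle determined by the collection of framed small necklaces corresponding to $a$.
   Context: Necklaces: given a semisimplicially triangulated circle bundle $\pi:E\to B$ and a $k$-simplex $\sigma$ of $B$, each $(k+1)$-simplex $\rho$ of $E$ over $\sigma$ has exactly one vertex of $\sigma$ whose preimage in $\rho$ is an edge; label $\rho$ by that vertex. The fibre over an interior point of $\sigma$ is a circle meeting these simplices in a cyclic order; the resulting cyclic word of labels (beads colored by vertices of $\sigma$) is the necklace $\mathcal{O}(\sigma)$. For a face $\tau\subset\sigma$, $\mathcal{O}(\tau)$ is obtained from $\mathcal{O}(\sigma)$ by deleting beads whose colors are not vertices of $\tau$, giving an injective order-preserving morphism $\mathcal{O}(\tau)\to\mathcal{O}(\sigma)$; these morphisms compose consistently. Conversely, a consistent collection of necklaces and morphisms over the simplices of $B$ determines a semisimplicially triangulated circle bundle over $B$. A small necklace has exactly two beads of each color and is invariant under rotation by half its length; it is framed if one bead of each color is marked bold, and a collection of framed necklaces is consistent if the morphisms send bold beads to bold beads. For an edge $ij$ the framed necklace has form $ijij$, and the edge is oriented $i\to j$ iff the bead immediately following the bold $i$ in the positive direction is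 the bold $j$. Elements of $Or(B)$ are identified with $1$-cochains $a$ taking values $\pm1$ ($a$ is $+1$ on an oriented edge iff the chosen orientation agrees with it). $d$ is the simplicial coboundary. $\mathcal{F}:\{\pm1,\pm3\}\to\{\pm1/4\}$ is defined by $\mathcal{F}(3)=\mathcal{F}(-1)=1/4$, $\mathcal{F}(-3)=\mathcal{F}(1)=-1/4$, applied valuewise. Sign convention for the Euler class: it is the class represented by the local-formula cocycle $\varepsilon$, where for an oriented triangle with vertices $0,1,2$ in the order of its orientation, $\varepsilon=\frac{\#(\mathrm{neg})-\#(\mathrm{pos})}{2\#(0)\#(1)\#(2)}$, a triple of distinctly colored beads being positive iff it reads $0,1,2$ in cyclic order along the positive direction. *)

theory Defs
  imports Complex_Main
begin

text \<open>A triangulated closed oriented surface B is given by its set T of positively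
oriented triangles, each written as an ordered triple (x,y,z) of distinct vertices in
the order of its orientation; T is closed under cyclic rotation of triples, so every
triangle of B occurs as its three cyclic rotations, and never with the opposite
orientation.  Closedness and consistency of the orientation: every oriented edge (x,y)
of a triangle lies in exactly one positively oriented triangle (x,y,_) and exactly one
(y,x,_), i.e. each edge lies in exactly two triangles inducing opposite orientations on
it.  Manifold condition: the link of every vertex is a single circle.\<close>

definition link_next :: "('v \<times> 'v \<times> 'v) set \<Rightarrow> 'v \<Rightarrow> 'v \<Rightarrow> 'v" where
  "link_next T v u = (THE w. (v, u, w) \<in> T)"

definition closed_oriented_surface :: "'v set \<Rightarrow> ('v \<times> 'v \<times> 'v) set \<Rightarrow> bool" where
  "closed_oriented_surface V T \<longleftrightarrow>
     finite T \<and>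
     V = {x. \<exists>y z. (x, y, z) \<in> T} \<and>
     (\<forall>x y z. (x, y, z) \<in> T \<longrightarrow>
        x \<noteq> y \<and> y \<noteq> z \<and> x \<noteq> z \<and> (y, z, x) \<in> T \<and> (x, z, y) \<notin> T) \<and>
     (\<forall>x y z. (x, y, z) \<in> T \<longrightarrow> (\<exists>!w. (x, y, w) \<in> T) \<and> (\<exists>!w. (y, x, w) \<in> T)) \<and>
     (\<forall>v \<in> V. \<forall>u w. (\<exists>z. (v, u, z) \<in> T) \<longrightarrow> (\<exists>z. (v, w, z) \<in> T) \<longrightarrow>
        (\<exists>n. (link_next T v ^^ n) u = w))"

definition simplices :: "('v \<times> 'v \<times> 'v) set \<Rightarrow> 'v set set" where
  "simplices T = (\<Union>(x, y, z) \<in> T. {{x}, {x, y}, {x, y, z}})"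

definition is_edge :: "('v \<times> 'v \<times> 'v) set \<Rightarrow> 'v \<Rightarrow> 'v \<Rightarrow> bool" where
  "is_edge T i j \<longleftrightarrow> i \<noteq> j \<and> (\<exists>z. (i, j, z) \<in> T \<or> (j, i, z) \<in> T)"

text \<open>A framed necklace is a cyclic word of beads; a bead is (colour, bold?).
A cyclic word is represented by a list, read in the positive direction, up to rotation.\<close>

definition rot_equiv :: "'a list \<Rightarrow> 'a list \<Rightarrow> bool" where
  "rot_equiv w w' \<longleftrightarrow> (\<exists>k. w' = rotate k w)"

definition framed_small_necklace :: "'v set \<Rightarrow> ('v \<times> bool) list \<Rightarrow> bool" where
  "framed_small_necklace \<sigma> w \<longleftrightarrow>
     length w = 2 * card \<sigma> \<and> fst ` set w \<subseteq> \<sigma> \<and>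
     (\<forall>c \<in> \<sigma>. length (filter (\<lambda>b. fst b = c) w) = 2 \<and>
               length (filter (\<lambda>b. b = (c, True)) w) = 1) \<and>
     (\<forall>k < card \<sigma>. fst (w ! (k + card \<sigma>)) = fst (w ! k))"

definition consistent_framed :: "('v \<times> 'v \<times> 'v) set \<Rightarrow> ('v set \<Rightarrow> ('v \<times> bool) list) \<Rightarrow> bool" where
  "consistent_framed T N \<longleftrightarrow>
     (\<forall>\<sigma> \<in> simplices T. framed_small_necklace \<sigma> (N \<sigma>)) \<and>
     (\<forall>\<sigma> \<in> simplices T. \<forall>\<tau>. \<tau> \<subseteq> \<sigma> \<and> \<tau> \<noteq> {} \<longrightarrow>
         rot_equiv (filter (\<lambda>b. fst b \<in> \<tau>) (N \<sigma>)) (N \<tau>))"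

definition bold_follows :: "('v \<times> bool) list \<Rightarrow> 'v \<Rightarrow> 'v \<Rightarrow> bool" where
  "bold_follows w i j \<longleftrightarrow>
     (\<exists>k < length w. w ! k = (i, True) \<and> w ! (Suc k mod length w) = (j, True))"

text \<open>Orientations of edges as 1-cochains with values +-1 (0 off the edges):
a i j = 1 iff the edge is oriented i -> j.\<close>
definition Or :: "('v \<times> 'v \<times> 'v) set \<Rightarrow> ('v \<Rightarrow> 'v \<Rightarrow> int) set" where
  "Or T = {a. \<forall>i j. (is_edge T i j \<longrightarrow> a i j \<in> {1, -1} \<and> a j i = - a i j) \<and>
                    (\<not> is_edge T i j \<longrightarrow> a i j = 0)}"

definition orient_of :: "('v \<times> 'v \<times> 'v) set \<Rightarrow> ('v set \<Rightarrow> ('v \<times> bool) list) \<Rightarrow> 'v \<Rightarrow> 'v \<Rightarrow> int" where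
  "orient_of T N i j =
     (if is_edge T i j then (if bold_follows (N {i, j}) i j then 1 else -1) else 0)"

definition Fmap :: "int \<Rightarrow> rat" where
  "Fmap n = (if n = 3 \<or> n = -1 then 1/4 else if n = -3 \<or> n = 1 then -1/4 else 0)"

definition euler_local :: "('v \<times> bool) list \<Rightarrow> 'v \<Rightarrow> 'v \<Rightarrow> 'v \<Rightarrow> rat" where
  "euler_local w x y z =
     (let n = length w; col = (\<lambda>p. fst (w ! p));
          trip = {(p, q, r). p < n \<and> q < n \<and> r < n \<and> col p = x \<and> col q = y \<and> col r = z};
          cyc = (\<lambda>(p::nat, q::nat, r::nat). (p < q \<and> q < r) \<or> (q < r \<and> r < p) \<or> (r < p \<and> p < q));
          npos = card {t \<in> trip. cyc t};
          nneg = card {t \<in> trip. \<not> cyc t};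
          cnt = (\<lambda>c. card {p. p < n \<and> col p = c})
      in (of_nat nneg - of_nat npos) / (2 * of_nat (cnt x * cnt y * cnt z)))"

end

theory Submission
  imports Defs
begin

text \<open>A framed small necklace over a simplex \<sigma> is the same thing as a doubled word u @ flip u,
where u lists each vertex of \<sigma> once and flip exchanges the bold marks; rotating it brings
any chosen bold bead to the front.  For simplices with at most three vertices this leaves only the
orientations induced on the edges as invariants: a framed necklace is determined up to rotation
by them, and every antisymmetric choice is realised.  Consistency makes all induced orientations
those of the edge necklaces, which gives the bijection with Or(B).  On a triangle the local Euler
formula and F(da) are both read off the same six-bead word, and they agree exactly, so the
Euler cocycle equals F(da) with zero correction term.  Only the local axioms of the surface
(vertices of a triangle are distinct, triangles are closed under rotation) are ever used.\<close>

section \<open>Framed small necklaces as doubled words\<close>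

definition flip :: "('v \<times> bool) list \<Rightarrow> ('v \<times> bool) list" where
  "flip u = map (\<lambda>(c, b). (c, \<not> b)) u"

definition doubled :: "('v \<times> bool) list \<Rightarrow> ('v \<times> bool) list" where
  "doubled u = u @ flip u"

lemma length_flip [simp]: "length (flip u) = length u"
  by (simp add: flip_def)

lemma map_fst_flip [simp]: "map fst (flip u) = map fst u"
  by (induction u) (auto simp: flip_def)

lemma fst_set_flip [simp]: "fst ` set (flip u) = fst ` set u"
  by (metis map_fst_flip set_map)

lemma flip_Nil [simp]: "flip [] = []"
  by (simp add: flip_def)

lemma flip_Cons [simp]: "flip ((c, b) # u) = (c, \<not> b) # flip u"
  by (simp add: flip_def)

lemma flip_append [simp]: "flip (u @ v) = flip u @ flip v"
  by (simp add: flip_def)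

lemma flip_flip [simp]: "flip (flip u) = u"
  by (induction u) (auto simp: flip_def)

lemma filter_flip:
  "(\<And>c b. P (c, \<not> b) = P (c, b)) \<Longrightarrow> filter P (flip u) = flip (filter P u)"
  by (induction u) (auto simp: flip_def)

lemma length_filter_colour_distinct:
  "distinct (map fst u) \<Longrightarrow> c \<in> fst ` set u \<Longrightarrow> length (filter (\<lambda>b. fst b = c) u) = 1"
  by (induction u) (force simp: filter_empty_conv)+

lemma length_filter_bold_distinct:
  "distinct (map fst u) \<Longrightarrow> (c, b) \<in> set u \<Longrightarrow> length (filter (\<lambda>x. x = (c, True)) u) = of_bool b"
  by (induction u) (force simp: filter_empty_conv)+

lemma doubled_is_framed_small_necklace:
  assumes "distinct (map fst u)" "fst ` set u = \<sigma>"
  shows "framed_small_necklace \<sigma> (doubled u)"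
  unfolding framed_small_necklace_def
proof (intro conjI ballI allI impI)
  have card: "card \<sigma> = length u"
    using assms distinct_card by fastforce
  show "length (doubled u) = 2 * card \<sigma>"
    by (simp add: doubled_def card)
  show "fst ` set (doubled u) \<subseteq> \<sigma>"
    using assms(2) by (simp add: doubled_def image_Un)
  fix c assume c: "c \<in> \<sigma>"
  then obtain b where cb: "(c, b) \<in> set u"
    using assms(2) by force
  have cb': "(c, \<not> b) \<in> set (flip u)"
    using cb by (force simp: flip_def)
  have d': "distinct (map fst (flip u))"
    using assms(1) by simp
  show "length (filter (\<lambda>b. fst b = c) (doubled u)) = 2"
    using length_filter_colour_distinct[OF assms(1)] length_filter_colour_distinct[OF d'] cb cb'
    by (force simp: doubled_def)
  show "length (filter (\<lambda>b. b = (c, True)) (doubled u)) = 1"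
    using length_filter_bold_distinct[OF assms(1) cb] length_filter_bold_distinct[OF d' cb']
    by (simp add: doubled_def)
next
  fix k assume "k < card \<sigma>"
  then show "fst (doubled u ! (k + card \<sigma>)) = fst (doubled u ! k)"
    using assms distinct_card[OF assms(1)]
    by (auto simp: doubled_def nth_append flip_def split: prod.split)
qed

lemma eq_flip_if_bold_once:
  assumes same_colours: "map fst v = map fst u" and distinct: "distinct (map fst u)"
    and bold_once: "\<And>c. c \<in> fst ` set u \<Longrightarrow> length (filter (\<lambda>b. b = (c, True)) (u @ v)) = 1"
  shows "v = flip u"
proof (rule nth_equalityI)
  have len: "length v = length u"
    using same_colours by (metis length_map)
  then show "length v = length (flip u)"
    by simp
  fix k assume k: "k < length v"
  obtain c b b' where uk: "u ! k = (c, b)" and vk: "v ! k = (c, b')"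
    using same_colours k len by (metis nth_map prod.collapse)
  have mem: "(c, b) \<in> set u" "(c, b') \<in> set v"
    using k len by (metis nth_mem uk vk)+
  have c: "c \<in> fst ` set u"
    using mem(1) by force
  have "distinct (map fst v)"
    using distinct same_colours by simp
  then have "of_bool b + of_bool b' = (1::nat)"
    using bold_once[OF c] length_filter_bold_distinct[OF distinct mem(1)]
      length_filter_bold_distinct[OF _ mem(2)] by simp
  then show "v ! k = flip u ! k"
    using k len uk vk by (cases b; cases b') (auto simp: flip_def)
qed

lemma framed_small_necklace_doubled:
  assumes "framed_small_necklace \<sigma> w"
  obtains u where "w = doubled u" "distinct (map fst u)" "fst ` set u = \<sigma>"
proof -
  define n where "n = card \<sigma>"
  define u where "u = take n w"
  define v where "v = drop n w"
  have w: "w = u @ v" and len: "length u = n" "length v = n"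
    using assms by (simp_all add: u_def v_def framed_small_necklace_def n_def)
  have colours: "fst ` set w \<subseteq> \<sigma>"
    and twice: "\<And>c. c \<in> \<sigma> \<Longrightarrow> length (filter (\<lambda>b. fst b = c) w) = 2"
    and bold_once: "\<And>c. c \<in> \<sigma> \<Longrightarrow> length (filter (\<lambda>b. b = (c, True)) w) = 1"
    and periodic: "\<And>k. k < n \<Longrightarrow> fst (w ! (k + n)) = fst (w ! k)"
    using assms by (auto simp: framed_small_necklace_def n_def)
  have same_colours: "map fst v = map fst u"
    using periodic len by (intro nth_equalityI) (auto simp: w nth_append add.commute)
  have count_colour: "length (filter (\<lambda>b. fst b = c) xs) = length (filter (\<lambda>d. d = c) (map fst xs))"
    for c and xs :: "('v \<times> bool) list"
    by (simp add: filter_map comp_def)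
  have once: "length (filter (\<lambda>b. fst b = c) u) = 1" if "c \<in> \<sigma>" for c
    using twice[OF that] count_colour[of c u] count_colour[of c v] by (simp add: w same_colours)
  have u_colours: "fst ` set u = \<sigma>"
  proof
    show "fst ` set u \<subseteq> \<sigma>"
      using colours by (auto simp: w)
    show "\<sigma> \<subseteq> fst ` set u"
    proof
      fix c assume "c \<in> \<sigma>"
      then have "filter (\<lambda>b. fst b = c) u \<noteq> []"
        using once by force
      then show "c \<in> fst ` set u"
        by (force simp: filter_empty_conv)
    qed
  qed
  have distinct: "distinct (map fst u)"
    by (rule card_distinct) (simp add: u_colours len n_def)
  have "v = flip u"
    using same_colours distinct bold_once u_colours by (intro eq_flip_if_bold_once) (auto simp: w)
  then show ?thesis
    using that w distinct u_colours by (simp add: doubled_def)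
qed

lemma rotate_doubled: "rotate (length p) (doubled (p @ q)) = doubled (q @ flip p)"
proof -
  have "doubled (p @ q) = p @ (q @ flip p @ flip q)"
    by (simp add: doubled_def flip_def)
  then show ?thesis
    by (simp only: rotate_append) (simp add: doubled_def)
qed

lemma rot_equiv_refl [simp]: "rot_equiv w w"
  unfolding rot_equiv_def by (metis rotate0 id_apply)

lemma rot_equiv_rotate: "rot_equiv w (rotate k w)"
  unfolding rot_equiv_def by blast

lemma rot_equiv_trans: "rot_equiv u v \<Longrightarrow> rot_equiv v w \<Longrightarrow> rot_equiv u w"
  unfolding rot_equiv_def by (metis rotate_rotate)

lemma rot_equiv_sym: "rot_equiv u v \<Longrightarrow> rot_equiv v u"
  unfolding rot_equiv_def
  by (metis append_take_drop_id length_drop rotate_append rotate_drop_take)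

lemma bold_follows_rotateD:
  assumes "bold_follows (rotate m w) i j"
  shows "bold_follows w i j"
proof -
  let ?L = "length w"
  obtain k where k: "k < ?L" "rotate m w ! k = (i, True)" "rotate m w ! (Suc k mod ?L) = (j, True)"
    using assms unfolding bold_follows_def by auto
  have "w ! ((m + k) mod ?L) = (i, True)"
    using k by (simp add: nth_rotate)
  moreover have "rotate m w ! (Suc k mod ?L) = w ! ((m + Suc k mod ?L) mod ?L)"
    using k(1) by (intro nth_rotate mod_less_divisor) linarith
  then have "w ! (Suc ((m + k) mod ?L) mod ?L) = (j, True)"
    using k(3) by (simp add: mod_simps)
  moreover have "(m + k) mod ?L < ?L"
    using k(1) by (intro mod_less_divisor) linarith
  ultimately show ?thesis
    unfolding bold_follows_def by blast
qed

lemma rot_equiv_bold_follows: "rot_equiv w w' \<Longrightarrow> bold_follows w' i j = bold_follows w i j"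
  using bold_follows_rotateD rot_equiv_sym unfolding rot_equiv_def by metis

lemma filter_rotate: "\<exists>k'. filter P (rotate k w) = rotate k' (filter P w)"
proof (induction k)
  case 0
  then show ?case
    by (metis rotate0 id_apply)
next
  case (Suc k)
  then obtain k' where k': "filter P (rotate k w) = rotate k' (filter P w)"
    by blast
  have "\<exists>k''. filter P (rotate1 v) = rotate k'' (filter P v)" for v :: "'a list"
    by (cases v) (auto intro: exI[of _ 0] exI[of _ 1])
  then show ?case
    using k' by (metis rotate_Suc rotate_rotate)
qed

lemma rot_equiv_filter: "rot_equiv w w' \<Longrightarrow> rot_equiv (filter P w) (filter P w')"
  unfolding rot_equiv_def by (metis filter_rotate)

section \<open>Induced edge orientations\<close>

definition induced_orientation :: "('v \<times> bool) list \<Rightarrow> 'v \<Rightarrow> 'v \<Rightarrow> bool" where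
  "induced_orientation w i j = bold_follows (filter (\<lambda>b. fst b \<in> {i, j}) w) i j"

lemma rot_equiv_induced_orientation:
  "rot_equiv w w' \<Longrightarrow> induced_orientation w' i j = induced_orientation w i j"
  unfolding induced_orientation_def by (metis rot_equiv_bold_follows rot_equiv_filter)

lemma induced_orientation_filter:
  assumes "i \<in> \<tau>" "j \<in> \<tau>"
  shows "induced_orientation (filter (\<lambda>b. fst b \<in> \<tau>) w) i j = induced_orientation w i j"
proof -
  have colours: "(\<lambda>b. fst b \<in> \<tau> \<and> fst b \<in> {i, j}) = (\<lambda>b. fst b \<in> {i, j})"
    using assms by auto
  show ?thesis
    unfolding induced_orientation_def filter_filter colours ..
qed

lemma filter_doubled:
  "(\<And>c b. P (c, \<not> b) = P (c, b)) \<Longrightarrow> filter P (doubled u) = doubled (filter P u)"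
  by (simp add: doubled_def filter_flip)

lemma bold_follows_4:
  "bold_follows [b0, b1, b2, b3] i j \<longleftrightarrow>
     b0 = (i, True) \<and> b1 = (j, True) \<or> b1 = (i, True) \<and> b2 = (j, True) \<or>
     b2 = (i, True) \<and> b3 = (j, True) \<or> b3 = (i, True) \<and> b0 = (j, True)"
proof -
  have ex4: "(\<exists>k<4. P k) \<longleftrightarrow> P 0 \<or> P 1 \<or> P 2 \<or> P (3::nat)" for P
    by (simp add: Ex_less_Suc2 eval_nat_numeral)
  have len: "length [b0, b1, b2, b3] = 4"
    by simp
  show ?thesis
    unfolding bold_follows_def len ex4 by simp
qed

lemma bold_follows_doubled_pair:
  assumes "i \<noteq> j"
  shows "bold_follows (doubled [(i, b0), (j, b1)]) i j = (b0 = b1)"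
    and "bold_follows (doubled [(i, b0), (j, b1)]) j i = (b0 \<noteq> b1)"
proof -
  have w: "doubled [(i, b0), (j, b1)] = [(i, b0), (j, b1), (i, \<not> b0), (j, \<not> b1)]"
    by (simp add: doubled_def flip_def)
  show "bold_follows (doubled [(i, b0), (j, b1)]) i j = (b0 = b1)"
    and "bold_follows (doubled [(i, b0), (j, b1)]) j i = (b0 \<noteq> b1)"
    unfolding w bold_follows_4 using assms by auto
qed

lemma framed_small_necklace_bold_first:
  assumes "framed_small_necklace \<sigma> w" "c \<in> \<sigma>"
  obtains u where "rot_equiv w (doubled ((c, True) # u))"
    and "distinct (c # map fst u)" "insert c (fst ` set u) = \<sigma>"
proof -
  obtain v where w: "w = doubled v" and v: "distinct (map fst v)" "fst ` set v = \<sigma>"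
    using assms(1) by (rule framed_small_necklace_doubled)
  obtain b where "(c, b) \<in> set v"
    using assms(2) v(2) by force
  then obtain p q where pq: "v = p @ (c, b) # q"
    by (meson split_list)
  define r where "r = q @ flip p"
  have rot: "rot_equiv w (doubled ((c, b) # r))"
    using rotate_doubled[of p "(c, b) # q"] rot_equiv_rotate[of w "length p"]
    by (simp add: w pq r_def)
  have r: "distinct (c # map fst r)" "insert c (fst ` set r) = \<sigma>"
    using v by (auto simp: pq r_def image_Un)
  show thesis
  proof (cases b)
    case True
    then show thesis
      using that rot r by simp
  next
    case False
    have "rotate (length ((c, b) # r)) (doubled ((c, b) # r)) = doubled ((c, True) # flip r)"
      using rotate_doubled[of "(c, b) # r" "[]"] False by simp
    then have "rot_equiv (doubled ((c, b) # r)) (doubled ((c, True) # flip r))"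
      by (metis rot_equiv_rotate)
    then have "rot_equiv w (doubled ((c, True) # flip r))"
      by (rule rot_equiv_trans[OF rot])
    with r show thesis
      by (intro that[of "flip r"]) simp_all
  qed
qed

lemma distinct_colours_singleton:
  assumes "distinct (map fst u)" "fst ` set u = {y}"
  obtains p where "u = [(y, p)]"
proof -
  have "length u = 1"
    using distinct_card[OF assms(1)] assms(2) by simp
  then obtain a where "u = [a]"
    by (auto simp: length_Suc_conv)
  with assms(2) that show thesis
    by (cases a) auto
qed

lemma distinct_colours_pair:
  assumes "distinct (map fst u)" "fst ` set u = {y, z}" "y \<noteq> z"
  obtains p q where "u = [(y, p), (z, q)]" | p q where "u = [(z, q), (y, p)]"
proof -
  have "length u = 2"
    using distinct_card[OF assms(1)] assms(2,3) by simp
  then obtain a b where "u = [a, b]"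
    by (auto simp: length_Suc_conv numeral_eq_Suc)
  with assms that show thesis
    by (cases a; cases b) (auto simp: doubleton_eq_iff)
qed

lemma vertex_necklace_normal_form:
  assumes "framed_small_necklace {v} w"
  shows "rot_equiv w (doubled [(v, True)])"
proof -
  obtain u where "rot_equiv w (doubled ((v, True) # u))" "distinct (v # map fst u)"
    "insert v (fst ` set u) = {v}"
    using framed_small_necklace_bold_first[OF assms] by blast
  then show ?thesis
    by (cases u) auto
qed

lemma edge_necklace_normal_form:
  assumes "framed_small_necklace {x, y} w" "x \<noteq> y"
  shows "rot_equiv w (doubled [(x, True), (y, induced_orientation w x y)])"
proof -
  obtain u where rot: "rot_equiv w (doubled ((x, True) # u))"
    and u: "distinct (x # map fst u)" "insert x (fst ` set u) = {x, y}"
    using framed_small_necklace_bold_first[OF assms(1)] by blast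
  have "distinct (map fst u)" "fst ` set u = {y}"
    using u assms(2) by (simp_all add: insert_ident)
  then obtain p where "u = [(y, p)]"
    by (rule distinct_colours_singleton)
  moreover have "induced_orientation (doubled [(x, True), (y, p)]) x y = p"
    using assms(2) by (simp add: induced_orientation_def filter_doubled bold_follows_doubled_pair)
  ultimately show ?thesis
    using rot rot_equiv_induced_orientation[OF rot] by simp
qed

text \<open>Given the orientations p, q of xy and xz, the orientation r of yz is p = q exactly when the
colours occur in the cyclic order x, y, z.\<close>

definition triangle_necklace :: "'v \<Rightarrow> 'v \<Rightarrow> 'v \<Rightarrow> bool \<Rightarrow> bool \<Rightarrow> bool \<Rightarrow> ('v \<times> bool) list" where
  "triangle_necklace x y z p q r =
     (if r = (p = q) then doubled [(x, True), (y, p), (z, q)] else doubled [(x, True), (z, q), (y, p)])"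

lemma triangle_necklace_framed:
  "x \<noteq> y \<Longrightarrow> x \<noteq> z \<Longrightarrow> y \<noteq> z \<Longrightarrow> framed_small_necklace {x, y, z} (triangle_necklace x y z p q r)"
  unfolding triangle_necklace_def by (auto intro!: doubled_is_framed_small_necklace)

lemma induced_orientation_triangle_necklace:
  assumes "x \<noteq> y" "x \<noteq> z" "y \<noteq> z"
  shows "induced_orientation (triangle_necklace x y z p q r) x y = p"
    and "induced_orientation (triangle_necklace x y z p q r) x z = q"
    and "induced_orientation (triangle_necklace x y z p q r) y z = r"
  using assms
  by (auto simp: triangle_necklace_def induced_orientation_def filter_doubled bold_follows_doubled_pair)

lemma triangle_necklace_normal_form:
  assumes "framed_small_necklace {x, y, z} w" "x \<noteq> y" "x \<noteq> z" "y \<noteq> z"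
  shows "rot_equiv w (triangle_necklace x y z
           (induced_orientation w x y) (induced_orientation w x z) (induced_orientation w y z))"
proof -
  obtain u where rot: "rot_equiv w (doubled ((x, True) # u))"
    and u: "distinct (x # map fst u)" "insert x (fst ` set u) = {x, y, z}"
    using framed_small_necklace_bold_first[OF assms(1)] by blast
  have "fst ` set u = {y, z}"
    using u assms(2,3) by (simp add: insert_ident)
  moreover have "distinct (map fst u)"
    using u(1) by simp
  ultimately consider (yz) p q where "u = [(y, p), (z, q)]" | (zy) p q where "u = [(z, q), (y, p)]"
    using assms(4) distinct_colours_pair by metis
  then obtain p q r where "doubled ((x, True) # u) = triangle_necklace x y z p q r"
  proof cases
    case (yz p q)
    then show thesis
      using that[of p q "p = q"] by (simp add: triangle_necklace_def)
  next
    case (zy p q)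
    then show thesis
      using that[of p q "p \<noteq> q"] by (cases p; cases q) (simp_all add: triangle_necklace_def)
  qed
  with rot have rot': "rot_equiv w (triangle_necklace x y z p q r)"
    by simp
  then have "induced_orientation w x y = p" "induced_orientation w x z = q"
    "induced_orientation w y z = r"
    using rot_equiv_induced_orientation[OF rot'] induced_orientation_triangle_necklace[OF assms(2-4)]
    by metis+
  with rot' show ?thesis
    by simp
qed

lemma framed_small_necklace_unique:
  assumes w: "framed_small_necklace \<sigma> w" and w': "framed_small_necklace \<sigma> w'" and "card \<sigma> \<le> 3"
    and orient: "\<forall>i\<in>\<sigma>. \<forall>j\<in>\<sigma>. i \<noteq> j \<longrightarrow> induced_orientation w i j = induced_orientation w' i j"
  shows "rot_equiv w w'"
proof -
  have "\<exists>w0. rot_equiv w w0 \<and> rot_equiv w' w0"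
  proof -
    consider "card \<sigma> = 0" | "card \<sigma> = 1" | "card \<sigma> = 2" | "card \<sigma> = 3"
      using \<open>card \<sigma> \<le> 3\<close> by linarith
    then show ?thesis
    proof cases
      case 1
      then have "w = []" "w' = []"
        using w w' by (simp_all add: framed_small_necklace_def)
      then show ?thesis
        by (metis rot_equiv_refl)
    next
      case 2
      then obtain v where "\<sigma> = {v}"
        by (rule card_1_singletonE)
      then show ?thesis
        using vertex_necklace_normal_form[of v w] vertex_necklace_normal_form[of v w'] w w' by auto
    next
      case 3
      then obtain x y where "\<sigma> = {x, y}" "x \<noteq> y"
        by (meson card_2_iff)
      then show ?thesis
        using edge_necklace_normal_form[of x y w] edge_necklace_normal_form[of x y w'] w w' orient
        by auto
    next
      case 4
      then obtain x y z where "\<sigma> = {x, y, z}" "x \<noteq> y" "x \<noteq> z" "y \<noteq> z"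
        by (meson card_3_iff)
      then show ?thesis
        using triangle_necklace_normal_form[of x y z w] triangle_necklace_normal_form[of x y z w'] w w' orient
        by auto
    qed
  qed
  then obtain w0 where "rot_equiv w w0" "rot_equiv w' w0"
    by blast
  then show ?thesis
    by (metis rot_equiv_sym rot_equiv_trans)
qed

lemma framed_small_necklace_filter:
  assumes "framed_small_necklace \<sigma> w" "\<tau> \<subseteq> \<sigma>"
  shows "framed_small_necklace \<tau> (filter (\<lambda>b. fst b \<in> \<tau>) w)"
proof -
  obtain u where "w = doubled u" "distinct (map fst u)" "fst ` set u = \<sigma>"
    using assms(1) by (rule framed_small_necklace_doubled)
  moreover have "fst ` set (filter (\<lambda>b. fst b \<in> \<tau>) u) = \<tau>"
    using calculation(3) assms(2) by force
  ultimately show ?thesis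
    by (simp add: filter_doubled distinct_map_filter doubled_is_framed_small_necklace)
qed

lemma bold_follows_swap:
  assumes "framed_small_necklace {i, j} w" "i \<noteq> j"
  shows "bold_follows w j i = (\<not> bold_follows w i j)"
proof -
  let ?w0 = "doubled [(i, True), (j, induced_orientation w i j)]"
  have r: "rot_equiv w ?w0"
    using assms by (rule edge_necklace_normal_form)
  show ?thesis
    using rot_equiv_bold_follows[OF r, of i j] rot_equiv_bold_follows[OF r, of j i]
      bold_follows_doubled_pair[OF assms(2), of True]
    by simp
qed

lemma induced_orientation_swap:
  assumes "framed_small_necklace \<sigma> w" "i \<in> \<sigma>" "j \<in> \<sigma>" "i \<noteq> j"
  shows "induced_orientation w j i = (\<not> induced_orientation w i j)"
proof -
  have "framed_small_necklace {i, j} (filter (\<lambda>b. fst b \<in> {i, j}) w)"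
    using assms by (intro framed_small_necklace_filter) auto
  moreover have "{j, i} = {i, j}"
    by auto
  ultimately show ?thesis
    unfolding induced_orientation_def using bold_follows_swap assms(4) by simp
qed

lemma induced_orientation_eq_if_one_way:
  assumes w: "framed_small_necklace \<sigma> w"
    and antisym: "\<And>i j. i \<in> \<sigma> \<Longrightarrow> j \<in> \<sigma> \<Longrightarrow> i \<noteq> j \<Longrightarrow> ori j i = (\<not> ori i j)"
    and one_way: "\<And>i j. i \<in> \<sigma> \<Longrightarrow> j \<in> \<sigma> \<Longrightarrow> i \<noteq> j \<Longrightarrow>
                    induced_orientation w i j = ori i j \<or> induced_orientation w j i = ori j i"
  shows "\<forall>i\<in>\<sigma>. \<forall>j\<in>\<sigma>. i \<noteq> j \<longrightarrow> induced_orientation w i j = ori i j"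
proof (intro ballI impI)
  fix i j assume ij: "i \<in> \<sigma>" "j \<in> \<sigma>" "i \<noteq> j"
  have "induced_orientation w j i = (\<not> induced_orientation w i j)"
    using w ij by (rule induced_orientation_swap)
  moreover have "ori j i = (\<not> ori i j)"
    using ij by (rule antisym)
  ultimately show "induced_orientation w i j = ori i j"
    using one_way[OF ij] by blast
qed

lemma ex_framed_small_necklace_orientation:
  assumes "finite \<sigma>" "card \<sigma> \<le> 3"
    and antisym: "\<And>i j. i \<in> \<sigma> \<Longrightarrow> j \<in> \<sigma> \<Longrightarrow> i \<noteq> j \<Longrightarrow> ori j i = (\<not> ori i j)"
  shows "\<exists>w. framed_small_necklace \<sigma> w \<and>
             (\<forall>i\<in>\<sigma>. \<forall>j\<in>\<sigma>. i \<noteq> j \<longrightarrow> induced_orientation w i j = ori i j)"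
proof -
  consider "card \<sigma> = 0" | "card \<sigma> = 1" | "card \<sigma> = 2" | "card \<sigma> = 3"
    using assms(2) by linarith
  then show ?thesis
  proof cases
    case 1
    then show ?thesis
      using assms(1) by (intro exI[of _ "[]"]) (simp add: framed_small_necklace_def)
  next
    case 2
    then obtain v where "\<sigma> = {v}"
      by (rule card_1_singletonE)
    then show ?thesis
      by (intro exI[of _ "doubled [(v, True)]"]) (simp add: doubled_is_framed_small_necklace)
  next
    case 3
    then obtain x y where \<sigma>: "\<sigma> = {x, y}" "x \<noteq> y"
      by (meson card_2_iff)
    let ?w = "doubled [(x, True), (y, ori x y)]"
    have w: "framed_small_necklace \<sigma> ?w"
      using \<sigma> by (intro doubled_is_framed_small_necklace) auto
    have xy: "induced_orientation ?w x y = ori x y"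
      using \<sigma>(2) by (simp add: induced_orientation_def filter_doubled bold_follows_doubled_pair)
    have "\<forall>i\<in>\<sigma>. \<forall>j\<in>\<sigma>. i \<noteq> j \<longrightarrow> induced_orientation ?w i j = ori i j"
      by (rule induced_orientation_eq_if_one_way[OF w antisym]) (use \<sigma> xy in auto)
    with w show ?thesis
      by blast
  next
    case 4
    then obtain x y z where \<sigma>: "\<sigma> = {x, y, z}" "x \<noteq> y" "x \<noteq> z" "y \<noteq> z"
      by (meson card_3_iff)
    let ?w = "triangle_necklace x y z (ori x y) (ori x z) (ori y z)"
    have w: "framed_small_necklace \<sigma> ?w"
      using \<sigma> by (simp add: triangle_necklace_framed)
    note io = induced_orientation_triangle_necklace[OF \<sigma>(2-4), of "ori x y" "ori x z" "ori y z"]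
    have "\<forall>i\<in>\<sigma>. \<forall>j\<in>\<sigma>. i \<noteq> j \<longrightarrow> induced_orientation ?w i j = ori i j"
      by (rule induced_orientation_eq_if_one_way[OF w antisym]) (use \<sigma> io in auto)
    with w show ?thesis
      by blast
  qed
qed

section \<open>The local Euler formula on a triangle\<close>

definition sign_of :: "bool \<Rightarrow> int" where
  "sign_of b = (if b then 1 else - 1)"

definition cyclic_triple :: "nat \<times> nat \<times> nat \<Rightarrow> bool" where
  "cyclic_triple = (\<lambda>(p, q, r). p < q \<and> q < r \<or> q < r \<and> r < p \<or> r < p \<and> p < q)"

definition colour_positions :: "('v \<times> bool) list \<Rightarrow> 'v \<Rightarrow> nat set" where
  "colour_positions w c = {p. p < length w \<and> fst (w ! p) = c}"

definition euler_ratio :: "nat set \<Rightarrow> nat set \<Rightarrow> nat set \<Rightarrow> rat" where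
  "euler_ratio A B C =
     (of_nat (card {t \<in> A \<times> B \<times> C. \<not> cyclic_triple t}) - of_nat (card {t \<in> A \<times> B \<times> C. cyclic_triple t}))
       / (2 * of_nat (card A * card B * card C))"

lemma euler_local_eq_euler_ratio:
  "euler_local w x y z = euler_ratio (colour_positions w x) (colour_positions w y) (colour_positions w z)"
proof -
  have "{(p, q, r). p < length w \<and> q < length w \<and> r < length w \<and>
          fst (w ! p) = x \<and> fst (w ! q) = y \<and> fst (w ! r) = z}
        = colour_positions w x \<times> colour_positions w y \<times> colour_positions w z"
    by (auto simp: colour_positions_def)
  then show ?thesis
    unfolding euler_local_def euler_ratio_def Let_def cyclic_triple_def colour_positions_def
    by simp
qed

lemma colour_positions_doubled_triangle:
  assumes "c0 \<noteq> c1" "c0 \<noteq> c2" "c1 \<noteq> c2"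
  shows "colour_positions (doubled [(c0, b0), (c1, b1), (c2, b2)]) c0 = {0, 3}"
    and "colour_positions (doubled [(c0, b0), (c1, b1), (c2, b2)]) c1 = {1, 4}"
    and "colour_positions (doubled [(c0, b0), (c1, b1), (c2, b2)]) c2 = {2, 5}"
proof -
  have lt6: "(p::nat) < 6 \<longleftrightarrow> p \<in> {0, 1, 2, 3, 4, 5}" for p
    by auto
  have len: "length (doubled [(c0, b0), (c1, b1), (c2, b2)]) = 6"
    by (simp add: doubled_def)
  show "colour_positions (doubled [(c0, b0), (c1, b1), (c2, b2)]) c0 = {0, 3}"
    and "colour_positions (doubled [(c0, b0), (c1, b1), (c2, b2)]) c1 = {1, 4}"
    and "colour_positions (doubled [(c0, b0), (c1, b1), (c2, b2)]) c2 = {2, 5}"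
    unfolding colour_positions_def len lt6 using assms by (auto simp: doubled_def)
qed

lemma euler_ratio_values:
  "euler_ratio {0, 3} {1, 4} {2, 5} = -1/4" "euler_ratio {1, 4} {2, 5} {0, 3} = -1/4"
  "euler_ratio {2, 5} {0, 3} {1, 4} = -1/4" "euler_ratio {0, 3} {2, 5} {1, 4} = 1/4"
  "euler_ratio {2, 5} {1, 4} {0, 3} = 1/4" "euler_ratio {1, 4} {0, 3} {2, 5} = 1/4"
proof -
  have enum: "{t \<in> set as \<times> set bs \<times> set cs. P t} = set (filter P (List.product as (List.product bs cs)))"
    for as bs cs :: "nat list" and P
    by (simp add: set_product)
  have sets: "{0, 3} = set [0, 3::nat]" "{1, 4} = set [1, 4::nat]" "{2, 5} = set [2, 5::nat]"
    by simp_all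
  show "euler_ratio {0, 3} {1, 4} {2, 5} = -1/4" "euler_ratio {1, 4} {2, 5} {0, 3} = -1/4"
    "euler_ratio {2, 5} {0, 3} {1, 4} = -1/4" "euler_ratio {0, 3} {2, 5} {1, 4} = 1/4"
    "euler_ratio {2, 5} {1, 4} {0, 3} = 1/4" "euler_ratio {1, 4} {0, 3} {2, 5} = 1/4"
    unfolding euler_ratio_def sets enum by (simp_all add: cyclic_triple_def)
qed

lemma Fmap_coboundary_eq_euler_local:
  assumes "framed_small_necklace {x, y, z} w" "x \<noteq> y" "x \<noteq> z" "y \<noteq> z"
  shows "Fmap (sign_of (induced_orientation w y z) - sign_of (induced_orientation w x z)
               + sign_of (induced_orientation w x y))
         = euler_local w x y z"
proof -
  obtain u where w: "w = doubled u" and u: "distinct (map fst u)" "fst ` set u = {x, y, z}"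
    using assms(1) by (rule framed_small_necklace_doubled)
  have "length u = 3"
    using distinct_card[OF u(1)] u(2) assms(2-4) by simp
  then obtain c0 b0 c1 b1 c2 b2 where u3: "u = [(c0, b0), (c1, b1), (c2, b2)]"
    by (auto simp: length_Suc_conv numeral_eq_Suc)
  have mem: "c0 \<in> {x, y, z}" "c1 \<in> {x, y, z}" "c2 \<in> {x, y, z}"
    using u(2) unfolding u3 by auto
  moreover have "c0 \<noteq> c1" "c0 \<noteq> c2" "c1 \<noteq> c2"
    using u(1) unfolding u3 by auto
  ultimately have "(c0, c1, c2) \<in> {(x, y, z), (y, z, x), (z, x, y), (x, z, y), (z, y, x), (y, x, z)}"
    by auto
  then show ?thesis
    unfolding w u3 using assms(2-4)
    \<comment> \<open>the simplifier writes the position 1 in the colour sets as Suc 0\<close>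
    by (elim insertE emptyE; cases b0; cases b1; cases b2;
        simp add: induced_orientation_def filter_doubled bold_follows_doubled_pair
          euler_local_eq_euler_ratio colour_positions_doubled_triangle Fmap_def sign_of_def
          euler_ratio_values[unfolded One_nat_def])
qed

definition cyclic_triangles :: "('v \<times> 'v \<times> 'v) set \<Rightarrow> bool" where
  "cyclic_triangles T \<longleftrightarrow> (\<forall>x y z. (x, y, z) \<in> T \<longrightarrow> x \<noteq> y \<and> y \<noteq> z \<and> x \<noteq> z \<and> (y, z, x) \<in> T)"

lemma closed_oriented_surface_cyclic_triangles:
  "closed_oriented_surface V T \<Longrightarrow> cyclic_triangles T"
  unfolding closed_oriented_surface_def cyclic_triangles_def by blast

lemma cyclic_trianglesD:
  assumes "cyclic_triangles T" "(x, y, z) \<in> T"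
  shows "x \<noteq> y" "y \<noteq> z" "x \<noteq> z" "(y, z, x) \<in> T" "(z, x, y) \<in> T"
  using assms unfolding cyclic_triangles_def by blast+

lemma simplicesE:
  assumes "\<sigma> \<in> simplices T"
  obtains x y z where "(x, y, z) \<in> T" "\<sigma> = {x} \<or> \<sigma> = {x, y} \<or> \<sigma> = {x, y, z}"
  using assms unfolding simplices_def by blast

lemma simplicesI:
  "(x, y, z) \<in> T \<Longrightarrow> {x} \<in> simplices T \<and> {x, y} \<in> simplices T \<and> {x, y, z} \<in> simplices T"
  unfolding simplices_def by blast

lemma card_simplices_le: "\<sigma> \<in> simplices T \<Longrightarrow> card \<sigma> \<le> 3"
  by (erule simplicesE) (auto simp: card_insert_if)

lemma simplices_face:
  assumes "cyclic_triangles T" "\<sigma> \<in> simplices T" "\<tau> \<subseteq> \<sigma>" "\<tau> \<noteq> {}"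
  shows "\<tau> \<in> simplices T"
proof -
  obtain x y z where t: "(x, y, z) \<in> T" and "\<sigma> = {x} \<or> \<sigma> = {x, y} \<or> \<sigma> = {x, y, z}"
    using assms(2) by (rule simplicesE)
  then have "\<tau> \<subseteq> {x, y, z}"
    using assms(3) by auto
  then have "\<tau> \<in> Pow {x, y, z}"
    by simp
  then have "\<tau> = {x} \<or> \<tau> = {y} \<or> \<tau> = {z} \<or> \<tau> = {x, y} \<or> \<tau> = {y, z} \<or> \<tau> = {z, x} \<or> \<tau> = {x, y, z}"
    using assms(4) by (auto simp: Pow_insert insert_commute)
  then show ?thesis
    using simplicesI[OF t] simplicesI[OF cyclic_trianglesD(4)[OF assms(1) t]]
      simplicesI[OF cyclic_trianglesD(5)[OF assms(1) t]]
    by (elim disjE) simp_all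
qed

lemma is_edge_simplices: "is_edge T i j \<Longrightarrow> {i, j} \<in> simplices T"
  unfolding is_edge_def using simplicesI by (metis insert_commute)

lemma simplices_is_edge:
  assumes "cyclic_triangles T" "\<sigma> \<in> simplices T" "i \<in> \<sigma>" "j \<in> \<sigma>" "i \<noteq> j"
  shows "is_edge T i j"
proof -
  obtain x y z where t: "(x, y, z) \<in> T" and "\<sigma> = {x} \<or> \<sigma> = {x, y} \<or> \<sigma> = {x, y, z}"
    using assms(2) by (rule simplicesE)
  then have "i \<in> {x, y, z}" "j \<in> {x, y, z}"
    using assms(3,4) by auto
  then show ?thesis
    using t cyclic_trianglesD[OF assms(1) t] assms(5) unfolding is_edge_def by auto
qed

lemma consistent_framedD:
  assumes "consistent_framed T N" "\<sigma> \<in> simplices T"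
  shows "framed_small_necklace \<sigma> (N \<sigma>)"
    and "\<tau> \<subseteq> \<sigma> \<Longrightarrow> \<tau> \<noteq> {} \<Longrightarrow> rot_equiv (filter (\<lambda>b. fst b \<in> \<tau>) (N \<sigma>)) (N \<tau>)"
  using assms unfolding consistent_framed_def by blast+

lemma consistent_framed_induced_orientation:
  assumes "consistent_framed T N" "\<sigma> \<in> simplices T" "i \<in> \<sigma>" "j \<in> \<sigma>"
  shows "induced_orientation (N \<sigma>) i j = bold_follows (N {i, j}) i j"
  using consistent_framedD(2)[OF assms(1,2), of "{i, j}"] assms(3,4)
  unfolding induced_orientation_def by (simp add: rot_equiv_bold_follows)

lemma orient_of_edge:
  "is_edge T i j \<Longrightarrow> orient_of T N i j = sign_of (bold_follows (N {i, j}) i j)"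
  unfolding orient_of_def sign_of_def by simp

lemma OrD:
  assumes "a \<in> Or T"
  shows "is_edge T i j \<Longrightarrow> a i j \<in> {1, -1} \<and> a j i = - a i j"
    and "\<not> is_edge T i j \<Longrightarrow> a i j = 0"
  using assms unfolding Or_def by auto

section \<open>Framings versus edge orientations\<close>

lemma orient_of_in_Or:
  assumes "consistent_framed T N"
  shows "orient_of T N \<in> Or T"
  unfolding Or_def
proof (intro CollectI allI conjI impI)
  fix i j assume e: "is_edge T i j"
  then have ij: "i \<noteq> j" and "is_edge T j i"
    unfolding is_edge_def by auto
  moreover have "framed_small_necklace {i, j} (N {i, j})"
    using consistent_framedD(1)[OF assms is_edge_simplices[OF e]] .
  ultimately show "orient_of T N j i = - orient_of T N i j"
    using e bold_follows_swap[OF _ ij] by (simp add: orient_of_edge sign_of_def insert_commute)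
  show "orient_of T N i j \<in> {1, -1}"
    using e by (simp add: orient_of_edge sign_of_def)
next
  fix i j assume "\<not> is_edge T i j"
  then show "orient_of T N i j = 0"
    by (simp add: orient_of_def)
qed

lemma orient_of_cong_rot_equiv:
  assumes "\<forall>\<sigma> \<in> simplices T. rot_equiv (N \<sigma>) (N' \<sigma>)"
  shows "orient_of T N = orient_of T N'"
proof (intro ext)
  fix i j
  show "orient_of T N i j = orient_of T N' i j"
  proof (cases "is_edge T i j")
    case True
    then have "rot_equiv (N {i, j}) (N' {i, j})"
      using assms is_edge_simplices[OF True] by blast
    then show ?thesis
      using rot_equiv_bold_follows[of "N {i, j}" "N' {i, j}" i j] by (simp add: orient_of_def)
  qed (simp add: orient_of_def)
qed

lemma consistent_framed_orient_of:
  assumes "consistent_framed T N" "\<sigma> \<in> simplices T" "i \<in> \<sigma>" "j \<in> \<sigma>" "is_edge T i j"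
  shows "orient_of T N i j = sign_of (induced_orientation (N \<sigma>) i j)"
  using assms by (simp add: orient_of_edge consistent_framed_induced_orientation)

lemma rot_equiv_if_orient_of_eq:
  assumes T: "cyclic_triangles T" and N: "consistent_framed T N" and N': "consistent_framed T N'"
    and eq: "orient_of T N = orient_of T N'" and \<sigma>: "\<sigma> \<in> simplices T"
  shows "rot_equiv (N \<sigma>) (N' \<sigma>)"
proof (rule framed_small_necklace_unique)
  show "framed_small_necklace \<sigma> (N \<sigma>)" "framed_small_necklace \<sigma> (N' \<sigma>)"
    using consistent_framedD(1) N N' \<sigma> by blast+
  show "card \<sigma> \<le> 3"
    using \<sigma> by (rule card_simplices_le)
  show "\<forall>i\<in>\<sigma>. \<forall>j\<in>\<sigma>. i \<noteq> j \<longrightarrow> induced_orientation (N \<sigma>) i j = induced_orientation (N' \<sigma>) i j"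
  proof (intro ballI impI)
    fix i j assume ij: "i \<in> \<sigma>" "j \<in> \<sigma>" "i \<noteq> j"
    then have "is_edge T i j"
      using simplices_is_edge[OF T \<sigma>] by blast
    then have "sign_of (induced_orientation (N \<sigma>) i j) = sign_of (induced_orientation (N' \<sigma>) i j)"
      using consistent_framed_orient_of[OF N \<sigma> ij(1,2)] consistent_framed_orient_of[OF N' \<sigma> ij(1,2)] eq
      by simp
    then show "induced_orientation (N \<sigma>) i j = induced_orientation (N' \<sigma>) i j"
      by (simp add: sign_of_def split: if_splits)
  qed
qed

lemma consistent_framed_if_induced_orientation:
  assumes T: "cyclic_triangles T"
    and N: "\<And>\<sigma>. \<sigma> \<in> simplices T \<Longrightarrow> framed_small_necklace \<sigma> (N \<sigma>)"
    and orient: "\<And>\<sigma> i j. \<sigma> \<in> simplices T \<Longrightarrow> i \<in> \<sigma> \<Longrightarrow> j \<in> \<sigma> \<Longrightarrow> i \<noteq> j \<Longrightarrow>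
                   induced_orientation (N \<sigma>) i j = ori i j"
  shows "consistent_framed T N"
  unfolding consistent_framed_def
proof (intro conjI ballI allI impI)
  fix \<sigma> assume "\<sigma> \<in> simplices T"
  then show "framed_small_necklace \<sigma> (N \<sigma>)"
    by (rule N)
next
  fix \<sigma> \<tau> assume \<sigma>: "\<sigma> \<in> simplices T" and \<tau>: "\<tau> \<subseteq> \<sigma> \<and> \<tau> \<noteq> {}"
  then have \<tau>_simplex: "\<tau> \<in> simplices T"
    using simplices_face[OF T] by blast
  show "rot_equiv (filter (\<lambda>b. fst b \<in> \<tau>) (N \<sigma>)) (N \<tau>)"
  proof (rule framed_small_necklace_unique)
    show "framed_small_necklace \<tau> (filter (\<lambda>b. fst b \<in> \<tau>) (N \<sigma>))"
      using N[OF \<sigma>] \<tau> by (intro framed_small_necklace_filter) auto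
    show "framed_small_necklace \<tau> (N \<tau>)"
      using \<tau>_simplex by (rule N)
    show "card \<tau> \<le> 3"
      using \<tau>_simplex by (rule card_simplices_le)
    show "\<forall>i\<in>\<tau>. \<forall>j\<in>\<tau>. i \<noteq> j \<longrightarrow>
            induced_orientation (filter (\<lambda>b. fst b \<in> \<tau>) (N \<sigma>)) i j = induced_orientation (N \<tau>) i j"
    proof (intro ballI impI)
      fix i j assume ij: "i \<in> \<tau>" "j \<in> \<tau>" "i \<noteq> j"
      have "induced_orientation (filter (\<lambda>b. fst b \<in> \<tau>) (N \<sigma>)) i j = induced_orientation (N \<sigma>) i j"
        using ij(1,2) by (rule induced_orientation_filter)
      also have "\<dots> = ori i j"
        using \<sigma> ij \<tau> by (intro orient) auto
      also have "\<dots> = induced_orientation (N \<tau>) i j"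
        using \<tau>_simplex ij by (intro orient[symmetric])
      finally show "induced_orientation (filter (\<lambda>b. fst b \<in> \<tau>) (N \<sigma>)) i j = induced_orientation (N \<tau>) i j" .
    qed
  qed
qed

lemma ex_consistent_framed_orient_of:
  assumes T: "cyclic_triangles T" and a: "a \<in> Or T"
  shows "\<exists>N. consistent_framed T N \<and> orient_of T N = a"
proof -
  have "\<exists>w. framed_small_necklace \<sigma> w \<and>
            (\<forall>i\<in>\<sigma>. \<forall>j\<in>\<sigma>. i \<noteq> j \<longrightarrow> induced_orientation w i j = (a i j = 1))"
    if \<sigma>: "\<sigma> \<in> simplices T" for \<sigma>
  proof (rule ex_framed_small_necklace_orientation)
    show "finite \<sigma>" "card \<sigma> \<le> 3"
      using \<sigma> by (auto elim: simplicesE simp: card_simplices_le)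
    fix i j assume "i \<in> \<sigma>" "j \<in> \<sigma>" "i \<noteq> j"
    then have "is_edge T i j"
      by (rule simplices_is_edge[OF T \<sigma>])
    then show "(a j i = 1) = (a i j \<noteq> 1)"
      using OrD(1)[OF a] by force
  qed
  then obtain N where N: "\<And>\<sigma>. \<sigma> \<in> simplices T \<Longrightarrow> framed_small_necklace \<sigma> (N \<sigma>)"
    and orient: "\<And>\<sigma> i j. \<sigma> \<in> simplices T \<Longrightarrow> i \<in> \<sigma> \<Longrightarrow> j \<in> \<sigma> \<Longrightarrow> i \<noteq> j \<Longrightarrow>
                   induced_orientation (N \<sigma>) i j = (a i j = 1)"
    by metis
  have consistent: "consistent_framed T N"
    using T N orient by (rule consistent_framed_if_induced_orientation)
  have "orient_of T N i j = a i j" for i j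
  proof (cases "is_edge T i j")
    case True
    then have ij: "i \<noteq> j" "{i, j} \<in> simplices T"
      by (auto simp: is_edge_def is_edge_simplices)
    then show ?thesis
      using consistent_framed_orient_of[OF consistent ij(2) _ _ True] orient[OF ij(2) _ _ ij(1)]
        OrD(1)[OF a True]
      by (auto simp: sign_of_def)
  next
    case False
    then show ?thesis
      using OrD(2)[OF a] by (simp add: orient_of_def)
  qed
  with consistent show ?thesis
    by blast
qed

lemma euler_local_eq_Fmap_coboundary:
  assumes T: "cyclic_triangles T" and N: "consistent_framed T N" and t: "(x, y, z) \<in> T"
  shows "Fmap (orient_of T N y z - orient_of T N x z + orient_of T N x y) = euler_local (N {x, y, z}) x y z"
proof -
  have \<sigma>: "{x, y, z} \<in> simplices T"
    using simplicesI[OF t] by blast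
  have xyz: "x \<noteq> y" "x \<noteq> z" "y \<noteq> z"
    using cyclic_trianglesD[OF T t] by auto
  have "is_edge T x y" "is_edge T x z" "is_edge T y z"
    using simplices_is_edge[OF T \<sigma>] xyz by auto
  then show ?thesis
    using consistent_framed_orient_of[OF N \<sigma>] consistent_framedD(1)[OF N \<sigma>]
      Fmap_coboundary_eq_euler_local[OF _ xyz]
    by simp
qed

theorem mainTheorem9:
  fixes V :: "'v set" and T :: "('v \<times> 'v \<times> 'v) set"
  assumes "closed_oriented_surface V T"
  shows "(\<forall>N. consistent_framed T N \<longrightarrow> orient_of T N \<in> Or T)
       \<and> (\<forall>N N'. consistent_framed T N \<longrightarrow> consistent_framed T N' \<longrightarrow>
              (\<forall>\<sigma> \<in> simplices T. rot_equiv (N \<sigma>) (N' \<sigma>)) \<longrightarrow> orient_of T N = orient_of T N')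
       \<and> (\<forall>N N'. consistent_framed T N \<longrightarrow> consistent_framed T N' \<longrightarrow>
              orient_of T N = orient_of T N' \<longrightarrow> (\<forall>\<sigma> \<in> simplices T. rot_equiv (N \<sigma>) (N' \<sigma>)))
       \<and> (\<forall>a \<in> Or T. \<exists>N. consistent_framed T N \<and> orient_of T N = a)
       \<and> (\<forall>a \<in> Or T. \<forall>N. consistent_framed T N \<and> orient_of T N = a \<longrightarrow>
            (\<exists>c :: 'v \<Rightarrow> 'v \<Rightarrow> rat. (\<forall>i j. c j i = - c i j) \<and>
               (\<forall>(x, y, z) \<in> T.
                  Fmap (a y z - a x z + a x y) - euler_local (N {x, y, z}) x y z
                    = c y z - c x z + c x y)))"
proof -
  have T: "cyclic_triangles T"
    using assms by (rule closed_oriented_surface_cyclic_triangles)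
  have euler: "\<forall>(x, y, z) \<in> T. Fmap (a y z - a x z + a x y) - euler_local (N {x, y, z}) x y z = 0"
    if "consistent_framed T N" "orient_of T N = a" for N a
    using euler_local_eq_Fmap_coboundary[OF T that(1)] that(2) by auto
  show ?thesis
    using orient_of_in_Or orient_of_cong_rot_equiv rot_equiv_if_orient_of_eq[OF T]
      ex_consistent_framed_orient_of[OF T] euler
    by (intro conjI allI ballI impI exI[of _ "\<lambda>_ _. 0"]) auto
qed

end
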